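(* The spaces $H^{1/2}(\mathbb{Z})$ and $\tilde H^{1/2}(\mathbb{R})$ are identical, with equivalent norms: there is a constant $c>0$ such that for every locally $L^2$ function $f$ on $\mathbb{R}$, $$c^{-1}\|f\|_{\tilde H^{1/2}(\mathbb{R})}^2\le \|f\|_{H^{1/2}(\mathbb{Z})}^2\le c\,\|f\|_{\tilde H^{1/2}(\mathbb{R})}^2 .$$
   Context: For a locally $L^2$ function $f$ on $\mathbb{R}$ (modulo constants), $\|f\|_{\tilde H^{1/2}(\mathbb{R})}^2=\iint_{|x-y|\le 1}\frac{|f(x)-f(y)|^2}{|x-y|^2}\,dx\,dy$, and $\tilde H^{1/2}(\mathbb{R})$ is the space where this is finite. $H^{1/2}(\mathbb{Z})$ is the Sobolev space of the metric graph with vertices $\mathbb{Z}$ and edges $[k,k+1]$ of length $1$, i.e. the space of locally $L^2$ functions (modulo constants) with finite norm $$\|f\|_{H^{1/2}(\mathbb{Z})}^2=\sum_{k\in\mathbb{Z}}\int_k^{k+1}\int_k^{k+1}\frac{|f(x)-f(y)|^2}{|x-y|^2}\,dx\,dy+\sum_{k\in\mathbb{Z}}\int_0^1\frac{|f(k+t)-f(k-t)|^2}{t}\,dt.$$ *)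

theory Defs
  imports "HOL-Analysis.Analysis"
begin

definition locally_L2 :: "(real \<Rightarrow> complex) \<Rightarrow> bool" where
  "locally_L2 f \<longleftrightarrow> f \<in> borel_measurable lborel \<and>
     (\<forall>K. compact K \<longrightarrow>
        (\<integral>\<^sup>+ x. indicator K x * ennreal ((cmod (f x))\<^sup>2) \<partial>lborel) < \<infinity>)"

definition H_tilde_R_sq :: "(real \<Rightarrow> complex) \<Rightarrow> ennreal" where
  "H_tilde_R_sq f =
     (\<integral>\<^sup>+ p. indicator {p. \<bar>fst p - snd p\<bar> \<le> 1} p *
        ennreal ((cmod (f (fst p) - f (snd p)))\<^sup>2 / (fst p - snd p)\<^sup>2)
      \<partial>(lborel \<Otimes>\<^sub>M lborel))"

text \<open>Squared norm of H^{1/2}(Z), the metric graph with vertices Z and unit edges.\<close>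
definition H_Z_sq :: "(real \<Rightarrow> complex) \<Rightarrow> ennreal" where
  "H_Z_sq f =
     (\<integral>\<^sup>+ k. (\<integral>\<^sup>+ p. indicator ({real_of_int k..real_of_int k + 1} \<times> {real_of_int k..real_of_int k + 1}) p *
        ennreal ((cmod (f (fst p) - f (snd p)))\<^sup>2 / (fst p - snd p)\<^sup>2)
      \<partial>(lborel \<Otimes>\<^sub>M lborel)) \<partial>count_space (UNIV :: int set))
   + (\<integral>\<^sup>+ k. (\<integral>\<^sup>+ t. indicator {0..1} t *
        ennreal ((cmod (f (real_of_int k + t) - f (real_of_int k - t)))\<^sup>2 / t) \<partial>lborel)
      \<partial>count_space (UNIV :: int set))"

end

theory Submission
  imports Defs
begin

(* Write q(x,y) = |f x - f y|^2 / (x - y)^2 (sq_slope below). Both norms integrate q over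
   pieces of the strip |x - y| <= 1; the graph norm keeps the unit squares [k,k+1]^2 but replaces
   the pairs straddling a vertex k by the jump term |f(k+u) - f(k-u)|^2 / u.

   Jump terms are controlled by the strip: for 0 <= v <= u <= 1 the path k+u, k+v, k+v-u, k-u has
   steps of length at most u, so |f(k+u) - f(k-u)|^2 / u^2 is at most 3 times the sum of q over
   the three steps; integrating over v in [0,u] produces the weight 1/u, and each step, as a
   function of (u,v), is a measure-preserving map onto a piece of the strip near k.

   Conversely the strip is covered by the squares and the rectangles [k-1,k] x [k,k+1] (and their
   transposes). On such a rectangle, going through the mirror point of the farther endpoint gives
   q(k-s,k+t) <= 2 |f(k+r) - f(k-r)|^2 / r^2 + 2 q on an adjacent square, with r = max s t, and
   integrating out the smaller of s, t turns the first term into the jump term. *)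

lemma measurable_lborel_pair [simp]:
  "measurable (lborel \<Otimes>\<^sub>M lborel) M = measurable (borel \<Otimes>\<^sub>M borel) M"
  by (intro measurable_cong_sets sets_pair_measure_cong sets_lborel refl)

lemma pred_mem_atLeastAtMost [measurable (raw)]:
  fixes g a b :: "'b \<Rightarrow> 'a::{linorder_topology, second_countable_topology}"
  assumes [measurable]: "g \<in> borel_measurable M" "a \<in> borel_measurable M" "b \<in> borel_measurable M"
  shows "Measurable.pred M (\<lambda>x. g x \<in> {a x..b x})"
  unfolding atLeastAtMost_iff by measurable

lemma nn_integral_lborel_pair_swap:
  assumes "h \<in> borel_measurable (borel \<Otimes>\<^sub>M borel)"
  shows "(\<integral>\<^sup>+(x, y). h (y, x) \<partial>(lborel \<Otimes>\<^sub>M lborel)) = integral\<^sup>N (lborel \<Otimes>\<^sub>M lborel) h"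
  using assms
  by (subst (2) lborel_pair.distr_pair_swap) (simp add: nn_integral_distr case_prod_beta')

lemma nn_integral_lborel_pair_shear:
  fixes h :: "real \<times> real \<Rightarrow> ennreal"
  assumes [measurable]: "h \<in> borel_measurable (borel \<Otimes>\<^sub>M borel)" "\<phi> \<in> borel_measurable borel"
    and c: "\<bar>c\<bar> = 1" and d: "\<bar>d\<bar> = 1"
  shows "(\<integral>\<^sup>+(u, v). h (a + c * u, \<phi> u + d * v) \<partial>(lborel \<Otimes>\<^sub>M lborel)) = integral\<^sup>N (lborel \<Otimes>\<^sub>M lborel) h"
proof -
  have "(\<integral>\<^sup>+(u, v). h (a + c * u, \<phi> u + d * v) \<partial>(lborel \<Otimes>\<^sub>M lborel))
      = (\<integral>\<^sup>+u. \<integral>\<^sup>+v. h (a + c * u, \<phi> u + d * v) \<partial>lborel \<partial>lborel)"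
    by (simp add: lborel.nn_integral_fst[symmetric, of "\<lambda>(u, v). h (a + c * u, \<phi> u + d * v)"])
  also have "\<dots> = (\<integral>\<^sup>+u. \<integral>\<^sup>+y. h (a + c * u, y) \<partial>lborel \<partial>lborel)"
  proof (rule nn_integral_cong)
    fix u
    show "(\<integral>\<^sup>+v. h (a + c * u, \<phi> u + d * v) \<partial>lborel) = (\<integral>\<^sup>+y. h (a + c * u, y) \<partial>lborel)"
      using nn_integral_real_affine[of "\<lambda>y. h (a + c * u, y)" d "\<phi> u"] d by simp
  qed
  also have "\<dots> = (\<integral>\<^sup>+x. \<integral>\<^sup>+y. h (x, y) \<partial>lborel \<partial>lborel)"
    using nn_integral_real_affine[of "\<lambda>x. \<integral>\<^sup>+y. h (x, y) \<partial>lborel" c a] c by simp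
  also have "\<dots> = integral\<^sup>N (lborel \<Otimes>\<^sub>M lborel) h"
    by (simp add: lborel.nn_integral_fst)
  finally show ?thesis .
qed

lemma dist_sq_triangle:
  fixes x y z :: "'a::metric_space"
  shows "(dist x z)\<^sup>2 \<le> 2 * (dist x y)\<^sup>2 + 2 * (dist y z)\<^sup>2"
proof -
  have "(dist x z)\<^sup>2 \<le> (dist x y + dist y z)\<^sup>2"
    by (intro power_mono dist_triangle) simp
  also have "\<dots> \<le> 2 * (dist x y)\<^sup>2 + 2 * (dist y z)\<^sup>2"
    using sum_squares_bound[of "dist x y" "dist y z"] by (simp add: power2_eq_square algebra_simps)
  finally show ?thesis .
qed

lemma dist_sq_triangle3:
  fixes x y z w :: "'a::metric_space"
  shows "(dist x w)\<^sup>2 \<le> 3 * ((dist x y)\<^sup>2 + (dist y z)\<^sup>2 + (dist z w)\<^sup>2)"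
proof -
  have "dist x w \<le> dist x y + dist y z + dist z w"
    using dist_triangle[of x w y] dist_triangle[of y w z] by linarith
  then have "(dist x w)\<^sup>2 \<le> (dist x y + dist y z + dist z w)\<^sup>2"
    by (rule power_mono[OF _ zero_le_dist])
  also have "\<dots> \<le> 3 * ((dist x y)\<^sup>2 + (dist y z)\<^sup>2 + (dist z w)\<^sup>2)"
    using sum_squares_bound[of "dist x y" "dist y z"] sum_squares_bound[of "dist x y" "dist z w"]
      sum_squares_bound[of "dist y z" "dist z w"]
    by (simp add: power2_eq_square algebra_simps)
  finally show ?thesis .
qed

definition sq_slope :: "(real \<Rightarrow> 'a::metric_space) \<Rightarrow> real \<Rightarrow> real \<Rightarrow> real" where
  "sq_slope f x y = (dist (f x) (f y))\<^sup>2 / (x - y)\<^sup>2"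

lemma sq_slope_nonneg: "0 \<le> sq_slope f x y"
  by (simp add: sq_slope_def)

lemma sq_slope_commute: "sq_slope f x y = sq_slope f y x"
  by (simp add: sq_slope_def dist_commute power2_commute)

lemma dist_sq_le_sq_slope:
  assumes "\<bar>x - y\<bar> \<le> r"
  shows "(dist (f x) (f y))\<^sup>2 \<le> r\<^sup>2 * sq_slope f x y"
proof (cases "x = y")
  case False
  have "(x - y)\<^sup>2 \<le> r\<^sup>2"
    using assms by (metis abs_ge_zero power2_abs power_mono)
  then have "(x - y)\<^sup>2 * sq_slope f x y \<le> r\<^sup>2 * sq_slope f x y"
    by (intro mult_right_mono sq_slope_nonneg)
  with False show ?thesis by (simp add: sq_slope_def)
qed (simp add: sq_slope_def)

lemma sq_slope_le_two_steps:
  assumes "\<bar>x - z\<bar> \<le> \<bar>x - y\<bar>"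
  shows "sq_slope f x y \<le> 2 * sq_slope f x z + 2 * (dist (f z) (f y))\<^sup>2 / (x - y)\<^sup>2"
proof (cases "x = y")
  case False
  have "(dist (f x) (f y))\<^sup>2 \<le> 2 * (dist (f x) (f z))\<^sup>2 + 2 * (dist (f z) (f y))\<^sup>2"
    by (rule dist_sq_triangle)
  also have "\<dots> \<le> 2 * ((x - y)\<^sup>2 * sq_slope f x z) + 2 * (dist (f z) (f y))\<^sup>2"
    using dist_sq_le_sq_slope[OF assms] by simp
  finally have "sq_slope f x y \<le> (2 * ((x - y)\<^sup>2 * sq_slope f x z) + 2 * (dist (f z) (f y))\<^sup>2) / (x - y)\<^sup>2"
    unfolding sq_slope_def[of f x y] by (rule divide_right_mono) simp
  also have "\<dots> = 2 * sq_slope f x z + 2 * (dist (f z) (f y))\<^sup>2 / (x - y)\<^sup>2"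
    using False by (simp add: add_divide_distrib)
  finally show ?thesis .
qed (simp add: sq_slope_def)

lemma cross_sq_slope_le:
  assumes "0 \<le> s" "0 \<le> t"
  shows "sq_slope f (a - s) (a + t) \<le>
      2 * (if s \<le> t then (dist (f (a + t)) (f (a - t)))\<^sup>2 / t\<^sup>2 else (dist (f (a + s)) (f (a - s)))\<^sup>2 / s\<^sup>2)
      + 2 * sq_slope f (a - t) (a - s) + 2 * sq_slope f (a + s) (a + t)"
proof -
  have jump_le: "(dist (f (a + r)) (f (a - r)))\<^sup>2 / (s + t)\<^sup>2 \<le> (dist (f (a + r)) (f (a - r)))\<^sup>2 / r\<^sup>2"
    if "0 \<le> r" "r \<le> s + t" for r
  proof (cases "r = 0")
    case False
    with that show ?thesis by (intro frac_le power_mono) auto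
  qed simp
  show ?thesis
  proof (cases "s \<le> t")
    case True
    have "sq_slope f (a - s) (a + t) \<le> 2 * sq_slope f (a - s) (a - t) + 2 * (dist (f (a - t)) (f (a + t)))\<^sup>2 / (s + t)\<^sup>2"
      using sq_slope_le_two_steps[of "a - s" "a - t" "a + t" f] True assms
      by (simp add: power2_commute algebra_simps)
    moreover have "sq_slope f (a - s) (a - t) = sq_slope f (a - t) (a - s)"
      by (rule sq_slope_commute)
    moreover have "dist (f (a - t)) (f (a + t)) = dist (f (a + t)) (f (a - t))"
      by (rule dist_commute)
    ultimately show ?thesis
      using True assms jump_le[of t] sq_slope_nonneg[of f "a + s" "a + t"] by auto
  next
    case False
    have "sq_slope f (a + t) (a - s) \<le> 2 * sq_slope f (a + t) (a + s) + 2 * (dist (f (a + s)) (f (a - s)))\<^sup>2 / (s + t)\<^sup>2"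
      using sq_slope_le_two_steps[of "a + t" "a + s" "a - s" f] False assms
      by (simp add: add.commute)
    moreover have "sq_slope f (a + t) (a - s) = sq_slope f (a - s) (a + t)"
      by (rule sq_slope_commute)
    moreover have "sq_slope f (a + t) (a + s) = sq_slope f (a + s) (a + t)"
      by (rule sq_slope_commute)
    ultimately show ?thesis
      using False assms jump_le[of s] sq_slope_nonneg[of f "a - t" "a - s"] by auto
  qed
qed

lemma vertex_sq_slope_le:
  assumes "0 \<le> v" "v \<le> u"
  shows "(dist (f (a + u)) (f (a - u)))\<^sup>2 / u\<^sup>2 \<le>
      3 * (sq_slope f (a + u) (a + v) + sq_slope f (a + v) (a + v - u) + sq_slope f (a + v - u) (a - u))"
proof (cases "u = 0")
  case False
  have "(dist (f (a + u)) (f (a - u)))\<^sup>2 \<le> 3 * ((dist (f (a + u)) (f (a + v)))\<^sup>2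
      + (dist (f (a + v)) (f (a + v - u)))\<^sup>2 + (dist (f (a + v - u)) (f (a - u)))\<^sup>2)"
    by (rule dist_sq_triangle3)
  also have "\<dots> \<le> 3 * (u\<^sup>2 * sq_slope f (a + u) (a + v) + u\<^sup>2 * sq_slope f (a + v) (a + v - u)
      + u\<^sup>2 * sq_slope f (a + v - u) (a - u))"
    using assms by (intro mult_left_mono add_mono dist_sq_le_sq_slope) auto
  also have "\<dots> = 3 * (sq_slope f (a + u) (a + v) + sq_slope f (a + v) (a + v - u)
      + sq_slope f (a + v - u) (a - u)) * u\<^sup>2"
    by (simp add: algebra_simps)
  finally show ?thesis
    using False by (subst pos_divide_le_eq) simp_all
qed (simp add: sq_slope_nonneg)

definition strip_energy :: "(real \<Rightarrow> 'a::metric_space) \<Rightarrow> ennreal" where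
  "strip_energy f =
    (\<integral>\<^sup>+(x, y). indicator {-1..1} (x - y) * ennreal (sq_slope f x y) \<partial>(lborel \<Otimes>\<^sub>M lborel))"

definition local_strip_energy :: "(real \<Rightarrow> 'a::metric_space) \<Rightarrow> real \<Rightarrow> ennreal" where
  "local_strip_energy f a =
    (\<integral>\<^sup>+(x, y). indicator {a - 1..a + 1} x * indicator {-1..1} (x - y) * ennreal (sq_slope f x y)
      \<partial>(lborel \<Otimes>\<^sub>M lborel))"

definition square_energy :: "(real \<Rightarrow> 'a::metric_space) \<Rightarrow> real \<Rightarrow> ennreal" where
  "square_energy f a =
    (\<integral>\<^sup>+(x, y). indicator {a..a + 1} x * indicator {a..a + 1} y * ennreal (sq_slope f x y)
      \<partial>(lborel \<Otimes>\<^sub>M lborel))"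

definition cross_energy :: "(real \<Rightarrow> 'a::metric_space) \<Rightarrow> real \<Rightarrow> ennreal" where
  "cross_energy f a =
    (\<integral>\<^sup>+(x, y). indicator {a - 1..a} x * indicator {a..a + 1} y * ennreal (sq_slope f x y)
      \<partial>(lborel \<Otimes>\<^sub>M lborel))"

definition vertex_energy :: "(real \<Rightarrow> 'a::metric_space) \<Rightarrow> real \<Rightarrow> ennreal" where
  "vertex_energy f a = (\<integral>\<^sup>+t. indicator {0..1} t * ennreal ((dist (f (a + t)) (f (a - t)))\<^sup>2 / t) \<partial>lborel)"

definition jump_density :: "(real \<Rightarrow> 'a::metric_space) \<Rightarrow> real \<Rightarrow> real \<times> real \<Rightarrow> ennreal" where
  "jump_density f a =
    (\<lambda>(u, v). indicator {0..1} u * indicator {0..u} v * ennreal ((dist (f (a + u)) (f (a - u)))\<^sup>2 / u\<^sup>2))"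

definition graph_energy :: "(real \<Rightarrow> 'a::metric_space) \<Rightarrow> ennreal" where
  "graph_energy f = (\<integral>\<^sup>+k. square_energy f (real_of_int k) \<partial>count_space UNIV)
    + (\<integral>\<^sup>+k. vertex_energy f (real_of_int k) \<partial>count_space UNIV)"

lemma H_tilde_R_sq_eq_strip_energy: "H_tilde_R_sq f = strip_energy f"
  unfolding H_tilde_R_sq_def strip_energy_def sq_slope_def
  by (intro nn_integral_cong) (auto simp: dist_norm abs_le_iff split: split_indicator)

lemma H_Z_sq_eq_graph_energy: "H_Z_sq f = graph_energy f"
  unfolding H_Z_sq_def graph_energy_def square_energy_def vertex_energy_def sq_slope_def
  by (simp add: dist_norm indicator_times case_prod_beta' mult.assoc)

lemma square_energy_le_local_strip_energy: "square_energy f a \<le> local_strip_energy f a"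
  unfolding square_energy_def local_strip_energy_def
  by (intro nn_integral_mono) (auto split: split_indicator)

lemma jump_density_le_local_strip_integrand:
  "jump_density f a (u, v) \<le> 3 * (
      indicator {a - 1..a + 1} (a + u) * indicator {-1..1} (u - v) * ennreal (sq_slope f (a + u) (a + v))
    + indicator {a - 1..a + 1} (a + v) * indicator {-1..1} u * ennreal (sq_slope f (a + v) (a + v - u))
    + indicator {a - 1..a + 1} (a + v - u) * indicator {-1..1} v * ennreal (sq_slope f (a + v - u) (a - u)))"
proof (cases "u \<in> {0..1} \<and> v \<in> {0..u}")
  case True
  then have "ennreal ((dist (f (a + u)) (f (a - u)))\<^sup>2 / u\<^sup>2) \<le> ennreal (3 * (sq_slope f (a + u) (a + v)
      + sq_slope f (a + v) (a + v - u) + sq_slope f (a + v - u) (a - u)))"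
    by (intro ennreal_leI vertex_sq_slope_le) auto
  with True show ?thesis
    by (simp add: jump_density_def ennreal_mult sq_slope_nonneg)
qed (auto simp: jump_density_def split: split_indicator)

lemma cross_integrand_le:
  "indicator {a - 1..a} (a - s) * indicator {a..a + 1} (a + t) * ennreal (sq_slope f (a - s) (a + t))
    \<le> 2 * jump_density f a (t, s) + 2 * jump_density f a (s, t)
      + 2 * (indicator {a - 1..a} (a - t) * indicator {a - 1..a} (a - s) * ennreal (sq_slope f (a - t) (a - s)))
      + 2 * (indicator {a..a + 1} (a + s) * indicator {a..a + 1} (a + t) * ennreal (sq_slope f (a + s) (a + t)))"
proof (cases "s \<in> {0..1} \<and> t \<in> {0..1}")
  case True
  let ?J = "if s \<le> t then (dist (f (a + t)) (f (a - t)))\<^sup>2 / t\<^sup>2 else (dist (f (a + s)) (f (a - s)))\<^sup>2 / s\<^sup>2"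
  have "ennreal (sq_slope f (a - s) (a + t))
      \<le> ennreal (2 * ?J + 2 * sq_slope f (a - t) (a - s) + 2 * sq_slope f (a + s) (a + t))"
    using True by (intro ennreal_leI cross_sq_slope_le) auto
  also have "\<dots> = 2 * ennreal ?J + 2 * ennreal (sq_slope f (a - t) (a - s)) + 2 * ennreal (sq_slope f (a + s) (a + t))"
    by (simp add: ennreal_mult sq_slope_nonneg)
  also have "ennreal ?J \<le> jump_density f a (t, s) + jump_density f a (s, t)"
    using True by (auto simp: jump_density_def)
  finally show ?thesis
    using True by (simp add: mult_left_mono add_right_mono)
qed (auto split: split_indicator)

lemma unit_strip_covered:
  fixes x y :: real
  assumes "\<bar>x - y\<bar> \<le> 1"
  obtains (square) k :: int where "x \<in> {k..k + 1}" "y \<in> {k..k + 1}"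
    | (cross) k :: int where "x \<in> {k - 1..k}" "y \<in> {k..k + 1}"
    | (cross_transposed) k :: int where "y \<in> {k - 1..k}" "x \<in> {k..k + 1}"
proof -
  define k where "k = \<lfloor>min x y\<rfloor>"
  have k: "real_of_int k \<le> min x y" "min x y < real_of_int k + 1"
    unfolding k_def by linarith+
  consider "max x y \<le> k + 1" | "x \<le> y" "k + 1 < y" | "y < x" "k + 1 < x"
    by linarith
  then show ?thesis
  proof cases
    case 1
    with k show ?thesis by (intro square[of k]) auto
  next
    case 2
    with k assms show ?thesis by (intro cross[of "k + 1"]) auto
  next
    case 3
    with k assms show ?thesis by (intro cross_transposed[of "k + 1"]) auto
  qed
qed

lemma indicator_unit_strip_le_pieces:
  fixes q :: ennreal
  shows "indicator {-1..1} (x - y) * q \<le> (\<integral>\<^sup>+k.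
      indicator {real_of_int k..real_of_int k + 1} x * indicator {real_of_int k..real_of_int k + 1} y * q
      + indicator {real_of_int k - 1..real_of_int k} x * indicator {real_of_int k..real_of_int k + 1} y * q
      + indicator {real_of_int k - 1..real_of_int k} y * indicator {real_of_int k..real_of_int k + 1} x * q
      \<partial>count_space UNIV)" (is "_ \<le> (\<integral>\<^sup>+k. ?P k \<partial>count_space UNIV)")
proof (cases "\<bar>x - y\<bar> \<le> 1")
  case True
  then obtain k where "q \<le> ?P k"
  proof (cases rule: unit_strip_covered)
    case (square k)
    then show ?thesis by (intro that[of k]) simp
  next
    case (cross k)
    then show ?thesis by (intro that[of k]) simp
  next
    case (cross_transposed k)
    then show ?thesis by (intro that[of k]) simp
  qed
  also have "\<dots> \<le> (\<integral>\<^sup>+k. ?P k \<partial>count_space UNIV)"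
    by (rule nn_integral_ge_point) simp
  finally show ?thesis
    using True by (simp add: abs_le_iff)
qed (auto simp: abs_le_iff split: split_indicator)

lemma nn_integral_indicator_near_integers_le:
  "(\<integral>\<^sup>+k. indicator {real_of_int k - 1..real_of_int k + 1} x \<partial>count_space UNIV) \<le> 3"
proof -
  have "(\<integral>\<^sup>+k. indicator {real_of_int k - 1..real_of_int k + 1} x \<partial>count_space UNIV)
      \<le> (\<integral>\<^sup>+k. indicator {\<lceil>x\<rceil> - 1..\<lceil>x\<rceil> + 1} k \<partial>count_space UNIV)"
  proof (intro nn_integral_mono)
    fix k :: int
    have "\<lceil>x\<rceil> - 1 \<le> k \<and> k \<le> \<lceil>x\<rceil> + 1" if "x \<in> {real_of_int k - 1..real_of_int k + 1}"
      using that le_of_int_ceiling[of x] by (simp add: ceiling_le_iff) linarith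
    then show "indicator {real_of_int k - 1..real_of_int k + 1} x \<le> (indicator {\<lceil>x\<rceil> - 1..\<lceil>x\<rceil> + 1} k :: ennreal)"
      by (auto split: split_indicator)
  qed
  also have "\<dots> = 3"
    by simp
  finally show ?thesis .
qed

context
  fixes f :: "real \<Rightarrow> 'a::{metric_space, second_countable_topology}"
  assumes f_borel [measurable]: "f \<in> borel_measurable borel"
begin

lemma borel_measurable_sq_slope [measurable]:
  assumes [measurable]: "u \<in> borel_measurable M" "v \<in> borel_measurable M"
  shows "(\<lambda>z. sq_slope f (u z) (v z)) \<in> borel_measurable M"
  unfolding sq_slope_def by measurable

lemma borel_measurable_jump_density [measurable]:
  "jump_density f a \<in> borel_measurable (borel \<Otimes>\<^sub>M borel)"
  unfolding jump_density_def by measurable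

lemma vertex_energy_eq_integral_jump_density:
  "vertex_energy f a = integral\<^sup>N (lborel \<Otimes>\<^sub>M lborel) (jump_density f a)"
proof -
  let ?g = "\<lambda>u. (dist (f (a + u)) (f (a - u)))\<^sup>2"
  have "(\<integral>\<^sup>+(u, v). indicator {0..1} u * indicator {0..u} v * ennreal (?g u / u\<^sup>2) \<partial>(lborel \<Otimes>\<^sub>M lborel))
      = (\<integral>\<^sup>+u. \<integral>\<^sup>+v. indicator {0..1} u * indicator {0..u} v * ennreal (?g u / u\<^sup>2) \<partial>lborel \<partial>lborel)"
    by (simp add: lborel.nn_integral_fst[symmetric,
          of "\<lambda>(u, v). indicator {0..1} u * indicator {0..u} v * ennreal (?g u / u\<^sup>2)"])
  also have "\<dots> = (\<integral>\<^sup>+u. indicator {0..1} u * ennreal (?g u / u) \<partial>lborel)"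
  proof (rule nn_integral_cong)
    fix u :: real
    show "(\<integral>\<^sup>+v. indicator {0..1} u * indicator {0..u} v * ennreal (?g u / u\<^sup>2) \<partial>lborel)
        = indicator {0..1} u * ennreal (?g u / u)"
    proof (cases "u \<in> {0..1}")
      case True
      have "(\<integral>\<^sup>+v. indicator {0..1} u * indicator {0..u} v * ennreal (?g u / u\<^sup>2) \<partial>lborel)
          = (\<integral>\<^sup>+v. ennreal (?g u / u\<^sup>2) * indicator {0..u} v \<partial>lborel)"
        using True by (intro nn_integral_cong) (simp add: mult.commute)
      also have "\<dots> = ennreal (?g u / u\<^sup>2) * ennreal u"
        using True by (simp add: nn_integral_cmult_indicator)
      also have "\<dots> = ennreal (?g u / u)"
        using True by (simp add: ennreal_mult'[symmetric] power2_eq_square)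
      finally show ?thesis
        using True by simp
    qed simp
  qed
  finally show ?thesis
    unfolding vertex_energy_def jump_density_def ..
qed

lemma vertex_energy_le_local_strip_energy: "vertex_energy f a \<le> 9 * local_strip_energy f a"
proof -
  define L where "L = (\<lambda>(x, y). indicator {a - 1..a + 1} x * indicator {-1..1} (x - y) * ennreal (sq_slope f x y))"
  have [measurable]: "L \<in> borel_measurable (borel \<Otimes>\<^sub>M borel)"
    unfolding L_def by measurable
  have pointwise: "jump_density f a (u, v) \<le> 3 * (L (a + u, a + v) + L (a + v, a + v - u) + L (a + v - u, a - u))" for u v
    using jump_density_le_local_strip_integrand[of f a u v] by (simp add: L_def)
  have "vertex_energy f a \<le> (\<integral>\<^sup>+(u, v). 3 * (L (a + u, a + v) + L (a + v, a + v - u) + L (a + v - u, a - u))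
      \<partial>(lborel \<Otimes>\<^sub>M lborel))"
    unfolding vertex_energy_eq_integral_jump_density
    by (intro nn_integral_mono) (simp only: split_paired_all prod.case pointwise)
  also have "\<dots> = 3 * ((\<integral>\<^sup>+(u, v). L (a + u, a + v) \<partial>(lborel \<Otimes>\<^sub>M lborel))
      + (\<integral>\<^sup>+(u, v). L (a + v, a + v - u) \<partial>(lborel \<Otimes>\<^sub>M lborel))
      + (\<integral>\<^sup>+(u, v). L (a + v - u, a - u) \<partial>(lborel \<Otimes>\<^sub>M lborel)))"
    by (simp add: nn_integral_add nn_integral_cmult split_beta')
  also have "(\<integral>\<^sup>+(u, v). L (a + u, a + v) \<partial>(lborel \<Otimes>\<^sub>M lborel)) = integral\<^sup>N (lborel \<Otimes>\<^sub>M lborel) L"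
    using nn_integral_lborel_pair_shear[of L "\<lambda>_. a" 1 1 a] by simp
  also have "(\<integral>\<^sup>+(u, v). L (a + v, a + v - u) \<partial>(lborel \<Otimes>\<^sub>M lborel)) = integral\<^sup>N (lborel \<Otimes>\<^sub>M lborel) L"
    using nn_integral_lborel_pair_swap[of "\<lambda>(u, v). L (a + v, a + v - u)"]
      nn_integral_lborel_pair_shear[of L "\<lambda>x. a + x" 1 "-1" a]
    by simp
  also have "(\<integral>\<^sup>+(u, v). L (a + v - u, a - u) \<partial>(lborel \<Otimes>\<^sub>M lborel)) = integral\<^sup>N (lborel \<Otimes>\<^sub>M lborel) L"
    using nn_integral_lborel_pair_shear[of "\<lambda>(x, y). L (y, x)" "\<lambda>u. a - u" "-1" 1 a]
      nn_integral_lborel_pair_swap[of L]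
    by (simp add: algebra_simps)
  also have "integral\<^sup>N (lborel \<Otimes>\<^sub>M lborel) L = local_strip_energy f a"
    unfolding local_strip_energy_def L_def ..
  also have "3 * (local_strip_energy f a + local_strip_energy f a + local_strip_energy f a) = 9 * local_strip_energy f a"
    using distrib_right[of 3 3 "local_strip_energy f a"] distrib_right[of 6 3 "local_strip_energy f a"]
    by (simp add: distrib_left)
  finally show ?thesis .
qed

lemma sum_local_strip_energy_le:
  "(\<integral>\<^sup>+k. local_strip_energy f (real_of_int k) \<partial>count_space UNIV) \<le> 3 * strip_energy f"
proof -
  let ?S = "\<lambda>x y. indicator {-1..1} (x - y) * ennreal (sq_slope f x y)"
  have "(\<integral>\<^sup>+k. local_strip_energy f (real_of_int k) \<partial>count_space UNIV)
      = (\<integral>\<^sup>+k. \<integral>\<^sup>+(x, y). indicator {real_of_int k - 1..real_of_int k + 1} x * ?S x y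
          \<partial>(lborel \<Otimes>\<^sub>M lborel) \<partial>count_space UNIV)"
    unfolding local_strip_energy_def by (simp add: mult.assoc)
  also have "\<dots> = (\<integral>\<^sup>+(x, y). \<integral>\<^sup>+k. indicator {real_of_int k - 1..real_of_int k + 1} x * ?S x y
      \<partial>count_space UNIV \<partial>(lborel \<Otimes>\<^sub>M lborel))"
    by (simp add: split_beta' nn_integral_count_space_nn_integral)
  also have "\<dots> = (\<integral>\<^sup>+(x, y). (\<integral>\<^sup>+k. indicator {real_of_int k - 1..real_of_int k + 1} x \<partial>count_space UNIV) * ?S x y
      \<partial>(lborel \<Otimes>\<^sub>M lborel))"
    by (simp add: split_beta' nn_integral_multc)
  also have "\<dots> \<le> (\<integral>\<^sup>+(x, y). 3 * ?S x y \<partial>(lborel \<Otimes>\<^sub>M lborel))"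
    by (intro nn_integral_mono) (simp add: split_beta' mult_right_mono nn_integral_indicator_near_integers_le)
  also have "\<dots> = 3 * strip_energy f"
    unfolding strip_energy_def by (simp add: split_beta' nn_integral_cmult)
  finally show ?thesis .
qed

lemma graph_energy_le_strip_energy: "graph_energy f \<le> 30 * strip_energy f"
proof -
  let ?L = "\<integral>\<^sup>+k. local_strip_energy f (real_of_int k) \<partial>count_space UNIV"
  have "(\<integral>\<^sup>+k. square_energy f (real_of_int k) \<partial>count_space UNIV) \<le> ?L"
    by (intro nn_integral_mono square_energy_le_local_strip_energy)
  moreover have "(\<integral>\<^sup>+k. vertex_energy f (real_of_int k) \<partial>count_space UNIV) \<le> 9 * ?L"
    by (subst nn_integral_cmult[symmetric]) (auto intro!: nn_integral_mono vertex_energy_le_local_strip_energy)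
  ultimately have "graph_energy f \<le> 10 * ?L"
    unfolding graph_energy_def using distrib_right[of 1 9 ?L] by (simp add: add_mono)
  also have "\<dots> \<le> 10 * (3 * strip_energy f)"
    by (intro mult_left_mono sum_local_strip_energy_le) simp
  finally show ?thesis
    by (simp add: mult.assoc[symmetric])
qed

lemma cross_energy_le:
  "cross_energy f a \<le> 4 * vertex_energy f a + 2 * square_energy f (a - 1) + 2 * square_energy f a"
proof -
  define C where "C = (\<lambda>(x, y). indicator {a - 1..a} x * indicator {a..a + 1} y * ennreal (sq_slope f x y))"
  define S where "S b = (\<lambda>(x, y). indicator {b..b + 1} x * indicator {b..b + 1} y * ennreal (sq_slope f x y))" for b
  have [measurable]: "C \<in> borel_measurable (borel \<Otimes>\<^sub>M borel)" "S b \<in> borel_measurable (borel \<Otimes>\<^sub>M borel)" for b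
    unfolding C_def S_def by measurable
  have pointwise: "C (a - s, a + t) \<le> 2 * jump_density f a (t, s) + 2 * jump_density f a (s, t)
      + 2 * S (a - 1) (a - t, a - s) + 2 * S a (a + s, a + t)" for s t
    using cross_integrand_le[of a s t f] by (simp add: C_def S_def)
  have "cross_energy f a = (\<integral>\<^sup>+(s, t). C (a - s, a + t) \<partial>(lborel \<Otimes>\<^sub>M lborel))"
    using nn_integral_lborel_pair_shear[of C "\<lambda>_. a" "-1" 1 a] by (simp add: cross_energy_def C_def)
  also have "\<dots> \<le> (\<integral>\<^sup>+(s, t). 2 * jump_density f a (t, s) + 2 * jump_density f a (s, t) + 2 * S (a - 1) (a - t, a - s) + 2 * S a (a + s, a + t)
      \<partial>(lborel \<Otimes>\<^sub>M lborel))"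
    by (intro nn_integral_mono) (simp only: split_beta pointwise)
  also have "\<dots> = 2 * (\<integral>\<^sup>+(s, t). jump_density f a (t, s) \<partial>(lborel \<Otimes>\<^sub>M lborel))
      + 2 * integral\<^sup>N (lborel \<Otimes>\<^sub>M lborel) (jump_density f a)
      + 2 * (\<integral>\<^sup>+(s, t). S (a - 1) (a - t, a - s) \<partial>(lborel \<Otimes>\<^sub>M lborel))
      + 2 * (\<integral>\<^sup>+(s, t). S a (a + s, a + t) \<partial>(lborel \<Otimes>\<^sub>M lborel))"
    by (simp add: nn_integral_add nn_integral_cmult split_beta')
  also have "(\<integral>\<^sup>+(s, t). jump_density f a (t, s) \<partial>(lborel \<Otimes>\<^sub>M lborel))
      = integral\<^sup>N (lborel \<Otimes>\<^sub>M lborel) (jump_density f a)"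
    by (rule nn_integral_lborel_pair_swap) measurable
  also have "integral\<^sup>N (lborel \<Otimes>\<^sub>M lborel) (jump_density f a) = vertex_energy f a"
    by (rule vertex_energy_eq_integral_jump_density[symmetric])
  also have "(\<integral>\<^sup>+(s, t). S (a - 1) (a - t, a - s) \<partial>(lborel \<Otimes>\<^sub>M lborel)) = square_energy f (a - 1)"
    using nn_integral_lborel_pair_shear[of "\<lambda>(x, y). S (a - 1) (y, x)" "\<lambda>_. a" "-1" "-1" a]
      nn_integral_lborel_pair_swap[of "S (a - 1)"]
    by (simp add: square_energy_def S_def)
  also have "(\<integral>\<^sup>+(s, t). S a (a + s, a + t) \<partial>(lborel \<Otimes>\<^sub>M lborel)) = square_energy f a"
    using nn_integral_lborel_pair_shear[of "S a" "\<lambda>_. a" 1 1 a] by (simp add: square_energy_def S_def)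
  also have "2 * vertex_energy f a + 2 * vertex_energy f a = 4 * vertex_energy f a"
    using distrib_right[of 2 2 "vertex_energy f a"] by simp
  finally show ?thesis .
qed

lemma strip_energy_le_squares_crosses:
  "strip_energy f \<le> (\<integral>\<^sup>+k. square_energy f (real_of_int k) + 2 * cross_energy f (real_of_int k) \<partial>count_space UNIV)"
proof -
  define S where "S k = (\<lambda>(x, y). indicator {real_of_int k..real_of_int k + 1} x
      * indicator {real_of_int k..real_of_int k + 1} y * ennreal (sq_slope f x y))" for k :: int
  define C where "C k = (\<lambda>(x, y). indicator {real_of_int k - 1..real_of_int k} x
      * indicator {real_of_int k..real_of_int k + 1} y * ennreal (sq_slope f x y))" for k :: int
  have [measurable]: "S k \<in> borel_measurable (borel \<Otimes>\<^sub>M borel)" "C k \<in> borel_measurable (borel \<Otimes>\<^sub>M borel)" for k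
    unfolding S_def C_def by measurable
  have pointwise: "indicator {-1..1} (x - y) * ennreal (sq_slope f x y)
      \<le> (\<integral>\<^sup>+k. S k (x, y) + C k (x, y) + C k (y, x) \<partial>count_space UNIV)" for x y
    using indicator_unit_strip_le_pieces[of x y "ennreal (sq_slope f x y)"]
    by (simp add: S_def C_def sq_slope_commute[of f y x])
  have "strip_energy f \<le> (\<integral>\<^sup>+(x, y). \<integral>\<^sup>+k. S k (x, y) + C k (x, y) + C k (y, x) \<partial>count_space UNIV
      \<partial>(lborel \<Otimes>\<^sub>M lborel))"
    unfolding strip_energy_def by (intro nn_integral_mono) (simp only: split_beta pointwise)
  also have "\<dots> = (\<integral>\<^sup>+k. \<integral>\<^sup>+(x, y). S k (x, y) + C k (x, y) + C k (y, x) \<partial>(lborel \<Otimes>\<^sub>M lborel)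
      \<partial>count_space UNIV)"
    by (simp add: split_beta' nn_integral_count_space_nn_integral)
  also have "\<dots> = (\<integral>\<^sup>+k. square_energy f (real_of_int k) + 2 * cross_energy f (real_of_int k) \<partial>count_space UNIV)"
  proof (rule nn_integral_cong)
    fix k :: int
    have "(\<integral>\<^sup>+(x, y). C k (y, x) \<partial>(lborel \<Otimes>\<^sub>M lborel)) = integral\<^sup>N (lborel \<Otimes>\<^sub>M lborel) (C k)"
      by (rule nn_integral_lborel_pair_swap) measurable
    then show "(\<integral>\<^sup>+(x, y). S k (x, y) + C k (x, y) + C k (y, x) \<partial>(lborel \<Otimes>\<^sub>M lborel))
        = square_energy f (real_of_int k) + 2 * cross_energy f (real_of_int k)"
      by (simp add: nn_integral_add split_beta' mult_2 add.assoc square_energy_def cross_energy_def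
          S_def C_def)
  qed
  finally show ?thesis .
qed

lemma strip_energy_le_graph_energy: "strip_energy f \<le> 9 * graph_energy f"
proof -
  let ?S = "\<integral>\<^sup>+k. square_energy f (real_of_int k) \<partial>count_space UNIV"
  let ?V = "\<integral>\<^sup>+k. vertex_energy f (real_of_int k) \<partial>count_space UNIV"
  have shift: "(\<integral>\<^sup>+k. square_energy f (real_of_int k - 1) \<partial>count_space UNIV) = ?S"
    using nn_integral_bij_count_space[of "\<lambda>k. k - 1" UNIV UNIV "\<lambda>k. square_energy f (real_of_int k)"]
    by (simp add: bij_betw_def inj_on_def surj_def)
  have "strip_energy f \<le> (\<integral>\<^sup>+k. square_energy f (real_of_int k) + 2 * cross_energy f (real_of_int k) \<partial>count_space UNIV)"
    by (rule strip_energy_le_squares_crosses)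
  also have "\<dots> \<le> (\<integral>\<^sup>+k. square_energy f (real_of_int k) + 2 * (4 * vertex_energy f (real_of_int k)
      + 2 * square_energy f (real_of_int k - 1) + 2 * square_energy f (real_of_int k)) \<partial>count_space UNIV)"
    by (intro nn_integral_mono add_left_mono mult_left_mono cross_energy_le) simp
  also have "\<dots> = ?S + 2 * (4 * ?V + 2 * ?S + 2 * ?S)"
    by (simp add: nn_integral_add nn_integral_cmult shift)
  also have "\<dots> = 9 * ?S + 8 * ?V"
    using distrib_right[of 1 8 ?S] distrib_right[of 4 4 ?S] by (simp add: algebra_simps)
  also have "\<dots> \<le> 9 * (?S + ?V)"
    by (simp add: distrib_left mult_right_mono)
  finally show ?thesis
    unfolding graph_energy_def .
qed

end

theorem theorem2p4:
  shows "\<exists>c::real. c > 0 \<and> (\<forall>f. locally_L2 f \<longrightarrow>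
           ennreal (1 / c) * H_tilde_R_sq f \<le> H_Z_sq f \<and>
           H_Z_sq f \<le> ennreal c * H_tilde_R_sq f)"
proof (intro exI[of _ 30] conjI allI impI)
  fix f
  assume "locally_L2 f"
  then have f_borel: "f \<in> borel_measurable borel"
    by (simp add: locally_L2_def)
  have "ennreal (1 / 30) * H_tilde_R_sq f \<le> ennreal (1 / 30) * (9 * H_Z_sq f)"
    using strip_energy_le_graph_energy[OF f_borel]
    by (intro mult_left_mono) (simp_all add: H_tilde_R_sq_eq_strip_energy H_Z_sq_eq_graph_energy)
  also have "\<dots> = ennreal (9 / 30) * H_Z_sq f"
    using ennreal_mult[of "1 / 30" 9] by (simp add: mult.assoc)
  also have "\<dots> \<le> H_Z_sq f"
    using mult_right_mono[of "ennreal (9 / 30)" 1 "H_Z_sq f"] by simp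
  finally show "ennreal (1 / 30) * H_tilde_R_sq f \<le> H_Z_sq f" .
  show "H_Z_sq f \<le> ennreal 30 * H_tilde_R_sq f"
    using graph_energy_le_strip_energy[OF f_borel]
    by (simp add: H_tilde_R_sq_eq_strip_energy H_Z_sq_eq_graph_energy)
qed simp

end
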